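(* Let $G$ be a connected graph with vertices $v_1,\dots,v_n$, and let $k_1,k_2,k_3$ be nonnegative integers with $k_2\neq k_3$. Then \[ \sum_{i=1}^{n} dav(G-v_i,k_1,k_2,k_3)=(n-2-k_1-k_2-k_3)\,dav(G,k_1,k_2,k_3)+(k_1+1)\,dav(G,k_1+1,k_2,k_3)+(k_2+1)\,dav(G,k_1,k_2+1,k_3)+(k_3+1)\,dav(G,k_1,k_2,k_3+1). \]
   Context: All graphs are finite, simple and undirected. $G-v$ denotes the graph obtained from $G$ by deleting vertex $v$ and its incident edges. For a graph $F$ and nonnegative integers $k_1,k_2,k_3$, $dav(F,k_1,k_2,k_3)$ denotes the number of pairs of adjacent vertices $x$ and $y$ in $F$ such that exactly $k_1$ vertices are adjacent to both $x$ and $y$, exactly $k_2$ vertices other than $y$ are adjacent to $x$ but not to $y$, and exactly $k_3$ vertices other than $x$ are adjacent to $y$ but not to $x$. *)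

theory Defs
  imports Main
begin

definition simple_graph :: "'a set \<Rightarrow> ('a \<Rightarrow> 'a \<Rightarrow> bool) \<Rightarrow> bool" where
  "simple_graph V E \<longleftrightarrow> finite V \<and> (\<forall>x y. E x y \<longrightarrow> x \<in> V \<and> y \<in> V)
     \<and> (\<forall>x y. E x y \<longrightarrow> E y x) \<and> (\<forall>x. \<not> E x x)"

definition connected_graph :: "'a set \<Rightarrow> ('a \<Rightarrow> 'a \<Rightarrow> bool) \<Rightarrow> bool" where
  "connected_graph V E \<longleftrightarrow> V \<noteq> {} \<and> (\<forall>x\<in>V. \<forall>y\<in>V. E\<^sup>*\<^sup>* x y)"

definition del_vertex_V :: "'a set \<Rightarrow> 'a \<Rightarrow> 'a set" where
  "del_vertex_V V v = V - {v}"

definition del_vertex_E :: "('a \<Rightarrow> 'a \<Rightarrow> bool) \<Rightarrow> 'a \<Rightarrow> 'a \<Rightarrow> 'a \<Rightarrow> bool" where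
  "del_vertex_E E v = (\<lambda>x y. E x y \<and> x \<noteq> v \<and> y \<noteq> v)"

definition dav :: "'a set \<Rightarrow> ('a \<Rightarrow> 'a \<Rightarrow> bool) \<Rightarrow> nat \<Rightarrow> nat \<Rightarrow> nat \<Rightarrow> nat" where
  "dav V E k1 k2 k3 = card {(x, y). x \<in> V \<and> y \<in> V \<and> E x y
      \<and> card {z \<in> V. E z x \<and> E z y} = k1
      \<and> card {z \<in> V. z \<noteq> y \<and> E z x \<and> \<not> E z y} = k2
      \<and> card {z \<in> V. z \<noteq> x \<and> E z y \<and> \<not> E z x} = k3}"

end

theory Submission
  imports Defs
begin

text \<open>Double count the pairs of a vertex v and an arc (x, y) of G - v counted by
dav(G - v, k1, k2, k3). For a fixed arc (x, y) of G and v \<notin> {x, y}, deleting v lowers by one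
exactly that one of the three neighbour counts of (x, y) (common, private to x, private to y)
whose set contains v, and leaves the other two unchanged. Hence the number of such v is
n - 2 - k1 - k2 - k3, k1 + 1, k2 + 1, k3 + 1 or 0 according to the counts of (x, y) in G.\<close>

definition deletion_count :: "int \<Rightarrow> nat \<Rightarrow> nat \<Rightarrow> nat \<Rightarrow> nat \<times> nat \<times> nat \<Rightarrow> int" where
  "deletion_count m k1 k2 k3 t =
      (m - int k1 - int k2 - int k3) * of_bool (t = (k1, k2, k3))
    + (int k1 + 1) * of_bool (t = (k1 + 1, k2, k3))
    + (int k2 + 1) * of_bool (t = (k1, k2 + 1, k3))
    + (int k3 + 1) * of_bool (t = (k1, k2, k3 + 1))"

lemma of_bool_card_Diff_singleton_triple:
  fixes C A B :: "'a set"
  assumes "finite C" "finite A" "finite B" and "C \<inter> A = {}" "C \<inter> B = {}" "A \<inter> B = {}"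
  shows "(of_bool ((card (C - {v}), card (A - {v}), card (B - {v})) = (k1, k2, k3)) :: 'b::semiring_1)
    = of_bool (v \<notin> C \<union> A \<union> B \<and> (card C, card A, card B) = (k1, k2, k3))
    + of_bool (v \<in> C \<and> (card C, card A, card B) = (k1 + 1, k2, k3))
    + of_bool (v \<in> A \<and> (card C, card A, card B) = (k1, k2 + 1, k3))
    + of_bool (v \<in> B \<and> (card C, card A, card B) = (k1, k2, k3 + 1))"
proof -
  consider "v \<in> C" | "v \<in> A" | "v \<in> B" | "v \<notin> C \<union> A \<union> B"
    by blast
  then show ?thesis
  proof cases
    case 1
    then have "A - {v} = A" "B - {v} = B" "card C = Suc (card (C - {v}))"
      using assms card.remove[of C v] by auto
    then show ?thesis using 1 by auto
  next
    case 2
    then have "C - {v} = C" "B - {v} = B" "card A = Suc (card (A - {v}))"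
      using assms card.remove[of A v] by auto
    then show ?thesis using 2 assms(4) by auto
  next
    case 3
    then have "C - {v} = C" "A - {v} = A" "card B = Suc (card (B - {v}))"
      using assms card.remove[of B v] by auto
    then show ?thesis using 3 assms(5,6) by auto
  qed auto
qed

lemma sum_of_bool_conj_const:
  "finite W \<Longrightarrow> (\<Sum>v\<in>W. of_bool (Q v \<and> P)) = of_nat (card {v\<in>W. Q v}) * of_bool P"
  by (simp add: Int_def)

lemma card_deletions_with_card_triple:
  fixes W C A B :: "'a set" and k1 k2 k3 :: nat
  assumes "finite W" and "C \<subseteq> W" "A \<subseteq> W" "B \<subseteq> W"
    and "C \<inter> A = {}" "C \<inter> B = {}" "A \<inter> B = {}"
  shows "int (card {v\<in>W. (card (C - {v}), card (A - {v}), card (B - {v})) = (k1, k2, k3)})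
    = deletion_count (int (card W)) k1 k2 k3 (card C, card A, card B)"
proof -
  have fin: "finite C" "finite A" "finite B"
    using assms(1-4) by (auto intro: finite_subset)
  have "card (C \<union> A \<union> B) = card C + card A + card B"
    using fin assms(5-7) by (simp add: card_Un_disjoint Int_Un_distrib2)
  moreover have "card (C \<union> A \<union> B) \<le> card W"
    using assms(1-4) by (simp add: card_mono)
  moreover have "{v\<in>W. v \<notin> C \<union> A \<union> B} = W - (C \<union> A \<union> B)"
    by blast
  ultimately have card_rest:
    "int (card {v\<in>W. v \<notin> C \<union> A \<union> B}) = int (card W) - int (card C) - int (card A) - int (card B)"
    using assms(2-4) fin by (simp add: card_Diff_subset of_nat_diff)
  have "int (card {v\<in>W. (card (C - {v}), card (A - {v}), card (B - {v})) = (k1, k2, k3)})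
     = (\<Sum>v\<in>W. of_bool ((card (C - {v}), card (A - {v}), card (B - {v})) = (k1, k2, k3)))"
    using assms(1) by (simp add: Int_def)
  also have "\<dots> = (\<Sum>v\<in>W. of_bool (v \<notin> C \<union> A \<union> B \<and> (card C, card A, card B) = (k1, k2, k3))
    + of_bool (v \<in> C \<and> (card C, card A, card B) = (k1 + 1, k2, k3))
    + of_bool (v \<in> A \<and> (card C, card A, card B) = (k1, k2 + 1, k3))
    + of_bool (v \<in> B \<and> (card C, card A, card B) = (k1, k2, k3 + 1)))"
    using fin assms(5-7) by (simp only: of_bool_card_Diff_singleton_triple)
  also have "\<dots> = int (card {v\<in>W. v \<notin> C \<union> A \<union> B}) * of_bool ((card C, card A, card B) = (k1, k2, k3))
    + int (card C) * of_bool ((card C, card A, card B) = (k1 + 1, k2, k3))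
    + int (card A) * of_bool ((card C, card A, card B) = (k1, k2 + 1, k3))
    + int (card B) * of_bool ((card C, card A, card B) = (k1, k2, k3 + 1))"
  proof -
    have "{v\<in>W. v \<in> X} = X" if "X \<subseteq> W" for X
      using that by blast
    then show ?thesis
      using assms(1-4) by (simp only: sum.distrib sum_of_bool_conj_const)
  qed
  finally show ?thesis
    unfolding card_rest deletion_count_def by (auto simp: of_bool_def)
qed

definition arcs :: "'a set \<Rightarrow> ('a \<Rightarrow> 'a \<Rightarrow> bool) \<Rightarrow> ('a \<times> 'a) set" where
  "arcs V E = {(x, y). x \<in> V \<and> y \<in> V \<and> E x y}"

definition common_nbrs :: "'a set \<Rightarrow> ('a \<Rightarrow> 'a \<Rightarrow> bool) \<Rightarrow> 'a \<Rightarrow> 'a \<Rightarrow> 'a set" where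
  "common_nbrs V E x y = {z \<in> V. E z x \<and> E z y}"

definition private_nbrs :: "'a set \<Rightarrow> ('a \<Rightarrow> 'a \<Rightarrow> bool) \<Rightarrow> 'a \<Rightarrow> 'a \<Rightarrow> 'a set" where
  "private_nbrs V E x y = {z \<in> V. z \<noteq> y \<and> E z x \<and> \<not> E z y}"

definition nbr_profile :: "'a set \<Rightarrow> ('a \<Rightarrow> 'a \<Rightarrow> bool) \<Rightarrow> 'a \<times> 'a \<Rightarrow> nat \<times> nat \<times> nat" where
  "nbr_profile V E p = (case p of (x, y) \<Rightarrow>
     (card (common_nbrs V E x y), card (private_nbrs V E x y), card (private_nbrs V E y x)))"

lemma finite_arcs: "finite V \<Longrightarrow> finite (arcs V E)"
  unfolding arcs_def by (rule finite_subset[of _ "V \<times> V"]) auto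

lemma dav_eq_card_arcs: "dav V E k1 k2 k3 = card {p \<in> arcs V E. nbr_profile V E p = (k1, k2, k3)}"
  unfolding dav_def arcs_def nbr_profile_def common_nbrs_def private_nbrs_def
  by (rule arg_cong[where f = card]) auto

lemma int_dav_eq_sum_arcs:
  "finite V \<Longrightarrow> int (dav V E k1 k2 k3) = (\<Sum>p\<in>arcs V E. of_bool (nbr_profile V E p = (k1, k2, k3)))"
  by (simp add: dav_eq_card_arcs finite_arcs Int_def)

lemma arcs_del_vertex:
  "arcs (del_vertex_V V v) (del_vertex_E E v) = {(x, y) \<in> arcs V E. x \<noteq> v \<and> y \<noteq> v}"
  unfolding arcs_def del_vertex_V_def del_vertex_E_def by auto

lemma common_nbrs_del_vertex:
  "x \<noteq> v \<Longrightarrow> y \<noteq> v \<Longrightarrow>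
    common_nbrs (del_vertex_V V v) (del_vertex_E E v) x y = common_nbrs V E x y - {v}"
  unfolding common_nbrs_def del_vertex_V_def del_vertex_E_def by auto

lemma private_nbrs_del_vertex:
  "x \<noteq> v \<Longrightarrow> y \<noteq> v \<Longrightarrow>
    private_nbrs (del_vertex_V V v) (del_vertex_E E v) x y = private_nbrs V E x y - {v}"
  unfolding private_nbrs_def del_vertex_V_def del_vertex_E_def by auto

lemma dav_del_vertex:
  "dav (del_vertex_V V v) (del_vertex_E E v) k1 k2 k3 = card {(x, y) \<in> arcs V E. v \<noteq> x \<and> v \<noteq> y \<and>
     (card (common_nbrs V E x y - {v}), card (private_nbrs V E x y - {v}), card (private_nbrs V E y x - {v}))
       = (k1, k2, k3)}"
  unfolding dav_eq_card_arcs arcs_del_vertex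
  by (rule arg_cong[where f = card])
    (auto simp: nbr_profile_def common_nbrs_del_vertex private_nbrs_del_vertex)

lemma nbrs_subset_and_disjoint:
  assumes "irreflp E"
  shows "common_nbrs V E x y \<subseteq> V - {x, y}" "private_nbrs V E x y \<subseteq> V - {x, y}"
    "private_nbrs V E y x \<subseteq> V - {x, y}"
    "common_nbrs V E x y \<inter> private_nbrs V E x y = {}"
    "common_nbrs V E x y \<inter> private_nbrs V E y x = {}"
    "private_nbrs V E x y \<inter> private_nbrs V E y x = {}"
  using assms unfolding common_nbrs_def private_nbrs_def by (auto dest: irreflpD)

lemma card_deletions_with_arc_profile:
  assumes "finite V" "irreflp E" "(x, y) \<in> arcs V E"
  shows "int (card {v\<in>V. v \<noteq> x \<and> v \<noteq> y \<and>
      (card (common_nbrs V E x y - {v}), card (private_nbrs V E x y - {v}), card (private_nbrs V E y x - {v}))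
        = (k1, k2, k3)})
    = deletion_count (int (card V) - 2) k1 k2 k3 (nbr_profile V E (x, y))"
proof -
  have xy: "x \<in> V" "y \<in> V" "x \<noteq> y"
    using assms(2,3) unfolding arcs_def by (auto dest: irreflpD)
  moreover have "card {x, y} \<le> card V"
    using xy assms(1) by (intro card_mono) auto
  ultimately have "card (V - {x, y}) = card V - 2" "card V \<ge> 2"
    using assms(1) by (simp_all add: card_Diff_subset)
  then have "int (card (V - {x, y})) = int (card V) - 2"
    by simp
  moreover have "{v\<in>V. v \<noteq> x \<and> v \<noteq> y \<and> Q v} = {v\<in>V - {x, y}. Q v}" for Q
    by blast
  ultimately show ?thesis
    using card_deletions_with_card_triple[OF _ nbrs_subset_and_disjoint[OF assms(2)]] assms(1)
    by (simp add: nbr_profile_def)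
qed

lemma sum_dav_del_vertex:
  fixes V :: "'a set" and E :: "'a \<Rightarrow> 'a \<Rightarrow> bool" and k1 k2 k3 :: nat
  assumes "finite V" and "irreflp E"
  shows "int (\<Sum>v\<in>V. dav (del_vertex_V V v) (del_vertex_E E v) k1 k2 k3)
    = (int (card V) - 2 - int k1 - int k2 - int k3) * int (dav V E k1 k2 k3)
      + (int k1 + 1) * int (dav V E (k1 + 1) k2 k3)
      + (int k2 + 1) * int (dav V E k1 (k2 + 1) k3)
      + (int k3 + 1) * int (dav V E k1 k2 (k3 + 1))"
proof -
  define counted_in_del where "counted_in_del v p \<longleftrightarrow> (case p of (x, y) \<Rightarrow> v \<noteq> x \<and> v \<noteq> y \<and>
    (card (common_nbrs V E x y - {v}), card (private_nbrs V E x y - {v}), card (private_nbrs V E y x - {v}))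
      = (k1, k2, k3))" for v p
  have "(\<Sum>v\<in>V. dav (del_vertex_V V v) (del_vertex_E E v) k1 k2 k3)
      = (\<Sum>v\<in>V. card {p \<in> arcs V E. counted_in_del v p})"
    unfolding dav_del_vertex counted_in_del_def by (simp add: split_def)
  also have "\<dots> = (\<Sum>p\<in>arcs V E. card {v \<in> V. counted_in_del v p})"
    using assms(1) finite_arcs by (intro sum_multicount_gen) auto
  finally have "int (\<Sum>v\<in>V. dav (del_vertex_V V v) (del_vertex_E E v) k1 k2 k3)
      = (\<Sum>p\<in>arcs V E. int (card {v \<in> V. counted_in_del v p}))"
    by simp
  also have "\<dots> = (\<Sum>p\<in>arcs V E. deletion_count (int (card V) - 2) k1 k2 k3 (nbr_profile V E p))"
    using card_deletions_with_arc_profile[OF assms]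
    by (intro sum.cong refl) (auto simp: counted_in_del_def)
  finally show ?thesis
    using assms(1) by (simp add: deletion_count_def sum.distrib sum_distrib_left int_dav_eq_sum_arcs)
qed

theorem theorem16:
  fixes V :: "'a set" and E :: "'a \<Rightarrow> 'a \<Rightarrow> bool" and k1 k2 k3 :: nat
  assumes "simple_graph V E" and "connected_graph V E" and "k2 \<noteq> k3"
  shows "int (\<Sum>v\<in>V. dav (del_vertex_V V v) (del_vertex_E E v) k1 k2 k3)
    = (int (card V) - 2 - int k1 - int k2 - int k3) * int (dav V E k1 k2 k3)
      + (int k1 + 1) * int (dav V E (k1 + 1) k2 k3)
      + (int k2 + 1) * int (dav V E k1 (k2 + 1) k3)
      + (int k3 + 1) * int (dav V E k1 k2 (k3 + 1))"
  using assms(1) unfolding simple_graph_def by (intro sum_dav_del_vertex) (auto intro: irreflpI)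

end
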